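(* In the setting described in the context, let $(\rho,y,x)$ together with symmetric matrices $W^1,\dots,W^m\in\mathbb{S}^n$ satisfy the constraints defining $\mathcal{R}_{\mathrm{QP}}$. Then for each $i\in[m]$, \[ \begin{pmatrix}\rho^i&(y^i)^\top\\ y^i&W^i\end{pmatrix}\succeq0 \quad\Longleftrightarrow\quad \begin{pmatrix}a_{i0}+a_i^\top x&1&x^\top\\ 1&\rho^i&(y^i)^\top\\ x&y^i&W^i\end{pmatrix}\succeq0 . \] Consequently, adding either family of constraints (over all $i\in[m]$) to $\mathcal{R}_{\mathrm{QP}}$ yields the same set.
   Context: Let $m,n,p$ be integers with $0\le p\le n$, $a_{i0}\in\mathbb{R}$, $a_i\in\mathbb{R}^n$ ($i\in[m]$), and let $\bar Cx\le\bar d$ be a linear system that includes $0\le x_j\le1$ for $j\in[p]$, with $P=\{x\mid\bar Cx\le\bar d\}$ nonempty and bounded and $a_{i0}+a_i^\top x>0$ on $P$. The constraints defining $\mathcal{R}_{\mathrm{QP}}$ on $(\rho,y,x,W^1,\dots,W^m)$, with $\rho=(\rho^i)$, $y=(y^i)$, $y^i\in\mathbb{R}^n$, are, for all $i\in[m]$: $\bar CW^i\bar C^\top-\bar d(y^i)^\top\bar C^\top-\bar Cy^i\bar d^\top+\rho^i\bar d\bar d^\top\ge0$ (entrywise); $a_{i0}\rho^i+a_i^\top y^i=1$; $\rho^i\ge0$; $x_j=a_{i0}y^i_j+\sum_{k=1}^na_{ik}W^i_{jk}$ for $j\in[n]$; $\bar Cy^i\le\rho^i\bar d$; $W^i_{jj}=y^i_j$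 for $j\in[p]$; and $\bar Cx\le\bar d$. $\mathbb{S}^n$ denotes symmetric matrices and $\succeq0$ positive semidefiniteness. *)

theory Defs
  imports Complex_Main
begin

text \<open>Conventions: indices are 0-based. [n] = {0..<n}. A k\<times>k real matrix is a function
  nat \<Rightarrow> nat \<Rightarrow> real read on {0..<k}\<times>{0..<k}; vectors in R^n are nat \<Rightarrow> real read on {0..<n}.\<close>

definition psd :: "nat \<Rightarrow> (nat \<Rightarrow> nat \<Rightarrow> real) \<Rightarrow> bool" where
  "psd k M \<longleftrightarrow> (\<forall>i<k. \<forall>j<k. M i j = M j i) \<and>
     (\<forall>v :: nat \<Rightarrow> real. 0 \<le> (\<Sum>i<k. \<Sum>j<k. v i * M i j * v j))"

definition symm_mat :: "nat \<Rightarrow> (nat \<Rightarrow> nat \<Rightarrow> real) \<Rightarrow> bool" where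
  "symm_mat k M \<longleftrightarrow> (\<forall>i<k. \<forall>j<k. M i j = M j i)"

text \<open>The (n+1)\<times>(n+1) matrix [[rho, y^T],[y, W]].\<close>
definition bord1 :: "real \<Rightarrow> (nat \<Rightarrow> real) \<Rightarrow> (nat \<Rightarrow> nat \<Rightarrow> real) \<Rightarrow> nat \<Rightarrow> nat \<Rightarrow> real" where
  "bord1 r y W = (\<lambda>i j. if i = 0 \<and> j = 0 then r
                        else if i = 0 then y (j - 1)
                        else if j = 0 then y (i - 1)
                        else W (i - 1) (j - 1))"

text \<open>The (n+2)\<times>(n+2) matrix [[t, 1, x^T],[1, rho, y^T],[x, y, W]].\<close>
definition bord2 :: "real \<Rightarrow> (nat \<Rightarrow> real) \<Rightarrow> real \<Rightarrow> (nat \<Rightarrow> real) \<Rightarrow> (nat \<Rightarrow> nat \<Rightarrow> real)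
                      \<Rightarrow> nat \<Rightarrow> nat \<Rightarrow> real" where
  "bord2 t x r y W = (\<lambda>i j. if i = 0 \<and> j = 0 then t
                        else if (i = 0 \<and> j = 1) \<or> (i = 1 \<and> j = 0) then 1
                        else if i = 0 then x (j - 2)
                        else if j = 0 then x (i - 2)
                        else bord1 r y W (i - 1) (j - 1))"

definition feasible :: "nat \<Rightarrow> nat \<Rightarrow> (nat \<Rightarrow> nat \<Rightarrow> real) \<Rightarrow> (nat \<Rightarrow> real) \<Rightarrow> (nat \<Rightarrow> real) \<Rightarrow> bool" where
  "feasible n q C d x \<longleftrightarrow> (\<forall>r<q. (\<Sum>j<n. C r j * x j) \<le> d r)"

definition RQP :: "nat \<Rightarrow> nat \<Rightarrow> nat \<Rightarrow> nat \<Rightarrow> (nat \<Rightarrow> nat \<Rightarrow> real) \<Rightarrow> (nat \<Rightarrow> real)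
    \<Rightarrow> (nat \<Rightarrow> real) \<Rightarrow> (nat \<Rightarrow> nat \<Rightarrow> real)
    \<Rightarrow> (nat \<Rightarrow> real) \<Rightarrow> (nat \<Rightarrow> nat \<Rightarrow> real) \<Rightarrow> (nat \<Rightarrow> real) \<Rightarrow> (nat \<Rightarrow> nat \<Rightarrow> nat \<Rightarrow> real) \<Rightarrow> bool" where
  "RQP m n p q C d a0 a rho y x W \<longleftrightarrow>
     (\<forall>i<m.
        (\<forall>r<q. \<forall>s<q.
           0 \<le> (\<Sum>j<n. \<Sum>k<n. C r j * W i j k * C s k)
                - d r * (\<Sum>k<n. y i k * C s k)
                - (\<Sum>j<n. C r j * y i j) * d s
                + rho i * d r * d s) \<and>
        a0 i * rho i + (\<Sum>k<n. a i k * y i k) = 1 \<and>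
        0 \<le> rho i \<and>
        (\<forall>j<n. x j = a0 i * y i j + (\<Sum>k<n. a i k * W i j k)) \<and>
        (\<forall>r<q. (\<Sum>j<n. C r j * y i j) \<le> rho i * d r) \<and>
        (\<forall>j<p. W i j j = y i j)) \<and>
     feasible n q C d x"

end

theory Submission
  imports Defs
begin

text \<open>Let \<open>M = [[\<rho>, y\<^sup>T], [y, W]]\<close> and \<open>u = (a\<^sub>i\<^sub>0, a\<^sub>i)\<close>. Two of the linear constraints of
  \<open>\<R>\<^sub>Q\<^sub>P\<close> say exactly that \<open>M u = (1, x)\<close>, and then \<open>u\<^sup>T M u = a\<^sub>i\<^sub>0 + a\<^sub>i\<^sup>T x\<close>. So the larger
  matrix is \<open>S\<^sup>T M S\<close> with \<open>S = [u | I]\<close>, i.e. \<open>M\<close> bordered by the column \<open>M u\<close> with corner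
  \<open>u\<^sup>T M u\<close>; it is positive semidefinite if \<open>M\<close> is. Conversely \<open>M\<close> is a principal submatrix of
  it. No other hypothesis is needed; in particular symmetry of \<open>W\<^sup>i\<close> follows from either side.\<close>

lemma quadratic_form_bord1:
  "(\<Sum>i<Suc N. \<Sum>j<Suc N. v i * bord1 t Y M i j * v j) =
    v 0 * t * v 0 + 2 * v 0 * (\<Sum>j<N. Y j * v (Suc j))
    + (\<Sum>i<N. \<Sum>j<N. v (Suc i) * M i j * v (Suc j))"
proof -
  have "(\<Sum>i<Suc N. \<Sum>j<Suc N. v i * bord1 t Y M i j * v j) =
     (v 0 * t * v 0 + (\<Sum>j<N. v 0 * Y j * v (Suc j))) +
     (\<Sum>i<N. v (Suc i) * Y i * v 0 + (\<Sum>j<N. v (Suc i) * M i j * v (Suc j)))"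
    unfolding sum.lessThan_Suc_shift by (simp add: bord1_def)
  then show ?thesis
    by (simp add: sum.distrib sum_distrib_left algebra_simps)
qed

lemma quadratic_form_scaled_add:
  fixes c :: real
  shows "(\<Sum>i<N. \<Sum>j<N. (c * u i + w i) * M i j * (c * u j + w j)) =
    c * c * (\<Sum>i<N. \<Sum>j<N. u i * M i j * u j) + c * (\<Sum>i<N. \<Sum>j<N. u i * M i j * w j)
    + c * (\<Sum>i<N. \<Sum>j<N. w i * M i j * u j) + (\<Sum>i<N. \<Sum>j<N. w i * M i j * w j)"
proof -
  have "(c * u i + w i) * M i j * (c * u j + w j) = c * c * (u i * M i j * u j)
    + c * (u i * M i j * w j) + c * (w i * M i j * u j) + w i * M i j * w j" for i j
    by algebra
  then show ?thesis by (simp add: sum.distrib sum_distrib_left)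
qed

lemma bilinear_form_eq_inner_mult:
  fixes M :: "nat \<Rightarrow> nat \<Rightarrow> real"
  shows "(\<Sum>i<N. \<Sum>j<N. w i * M i j * u j) = (\<Sum>i<N. w i * (\<Sum>j<N. M i j * u j))"
  by (simp add: sum_distrib_left mult.assoc)

lemma bilinear_form_swap:
  fixes M :: "nat \<Rightarrow> nat \<Rightarrow> real"
  assumes "symm_mat N M"
  shows "(\<Sum>i<N. \<Sum>j<N. u i * M i j * w j) = (\<Sum>i<N. \<Sum>j<N. w i * M i j * u j)"
proof -
  have "(\<Sum>i<N. \<Sum>j<N. u i * M i j * w j) = (\<Sum>j<N. \<Sum>i<N. u i * M i j * w j)"
    by (rule sum.swap)
  also have "\<dots> = (\<Sum>j<N. \<Sum>i<N. w j * M j i * u i)"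
    using assms unfolding symm_mat_def by (intro sum.cong refl) (simp add: algebra_simps)
  finally show ?thesis .
qed

lemma psd_imp_symm_mat: "psd N M \<Longrightarrow> symm_mat N M"
  by (simp add: psd_def symm_mat_def)

lemma psd_bord1_imp_psd:
  assumes "psd (Suc N) (bord1 t Y M)"
  shows "psd N M"
  unfolding psd_def
proof (intro conjI allI impI)
  fix i j assume "i < N" "j < N"
  then have "bord1 t Y M (Suc i) (Suc j) = bord1 t Y M (Suc j) (Suc i)"
    using assms unfolding psd_def by simp
  then show "M i j = M j i"
    by (simp add: bord1_def)
next
  fix w :: "nat \<Rightarrow> real"
  let ?v = "\<lambda>i. if i = 0 then 0 else w (i - 1)"
  have "0 \<le> (\<Sum>i<Suc N. \<Sum>j<Suc N. ?v i * bord1 t Y M i j * ?v j)"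
    using assms unfolding psd_def by (elim conjE allE)
  then show "0 \<le> (\<Sum>i<N. \<Sum>j<N. w i * M i j * w j)"
    unfolding quadratic_form_bord1 by simp
qed

lemma psd_imp_psd_bord1:
  assumes psd: "psd N M"
    and Y: "\<forall>i<N. (\<Sum>j<N. M i j * u j) = Y i"
    and t: "t = (\<Sum>i<N. u i * Y i)"
  shows "psd (Suc N) (bord1 t Y M)"
  unfolding psd_def
proof (intro conjI allI impI)
  fix i j assume "i < Suc N" "j < Suc N"
  then show "bord1 t Y M i j = bord1 t Y M j i"
    using psd_imp_symm_mat[OF psd] unfolding symm_mat_def bord1_def by auto
next
  fix v :: "nat \<Rightarrow> real"
  let ?w = "\<lambda>i. v (Suc i)"
  have Mu: "(\<Sum>i<N. \<Sum>j<N. w i * M i j * u j) = (\<Sum>i<N. Y i * w i)" for w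
  proof -
    have "(\<Sum>i<N. \<Sum>j<N. w i * M i j * u j) = (\<Sum>i<N. w i * Y i)"
      using Y by (simp add: bilinear_form_eq_inner_mult)
    then show ?thesis by (simp add: mult.commute)
  qed
  have "0 \<le> (\<Sum>i<N. \<Sum>j<N. (v 0 * u i + ?w i) * M i j * (v 0 * u j + ?w j))"
    using psd unfolding psd_def by (elim conjE allE)
  also have "\<dots> = (\<Sum>i<Suc N. \<Sum>j<Suc N. v i * bord1 t Y M i j * v j)"
    unfolding quadratic_form_scaled_add quadratic_form_bord1
      bilinear_form_swap[OF psd_imp_symm_mat[OF psd], of u ?w] Mu t
    by (simp add: algebra_simps)
  finally show "0 \<le> (\<Sum>i<Suc N. \<Sum>j<Suc N. v i * bord1 t Y M i j * v j)" .
qed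

lemma bord2_eq_bord1_bord1:
  "bord2 t x r y W = bord1 t (\<lambda>j. if j = 0 then 1 else x (j - 1)) (bord1 r y W)"
  by (auto simp: bord2_def bord1_def fun_eq_iff numeral_2_eq_2)

lemma psd_bord1_iff_psd_bord2:
  assumes normalization: "a0 * r + (\<Sum>k<n. a k * y k) = 1"
    and x: "\<forall>j<n. x j = a0 * y j + (\<Sum>k<n. a k * W j k)"
  shows "psd (n + 1) (bord1 r y W) \<longleftrightarrow> psd (n + 2) (bord2 (a0 + (\<Sum>k<n. a k * x k)) x r y W)"
proof -
  let ?u = "\<lambda>k. if k = 0 then a0 else a (k - 1)"
  let ?Y = "\<lambda>j. if j = 0 then 1 else x (j - 1)"
  let ?t = "a0 + (\<Sum>k<n. a k * x k)"
  have "n + 2 = Suc (n + 1)" by simp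
  then have bord2_psd_iff:
      "psd (n + 2) (bord2 ?t x r y W) \<longleftrightarrow> psd (Suc (n + 1)) (bord1 ?t ?Y (bord1 r y W))"
    by (simp only: bord2_eq_bord1_bord1)
  have Y: "\<forall>j<n + 1. (\<Sum>k<n + 1. bord1 r y W j k * ?u k) = ?Y j"
  proof (intro allI impI)
    fix j assume "j < n + 1"
    then show "(\<Sum>k<n + 1. bord1 r y W j k * ?u k) = ?Y j"
      using normalization x unfolding Suc_eq_plus1[symmetric] sum.lessThan_Suc_shift
      by (cases j) (simp_all add: bord1_def mult.commute)
  qed
  have t: "?t = (\<Sum>j<n + 1. ?u j * ?Y j)"
    unfolding Suc_eq_plus1[symmetric] sum.lessThan_Suc_shift by simp
  show ?thesis
    unfolding bord2_psd_iff using psd_imp_psd_bord1[OF _ Y t] psd_bord1_imp_psd by blast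
qed

lemma RQP_psd_bord1_iff_psd_bord2:
  assumes "RQP m n p q C d a0 a rho y x W" and "i < m"
  shows "psd (n + 1) (bord1 (rho i) (y i) (W i)) \<longleftrightarrow>
    psd (n + 2) (bord2 (a0 i + (\<Sum>k<n. a i k * x k)) x (rho i) (y i) (W i))"
  using assms by (intro psd_bord1_iff_psd_bord2) (auto simp: RQP_def)

theorem proposition7:
  fixes m n p q :: nat
    and C :: "nat \<Rightarrow> nat \<Rightarrow> real" and d :: "nat \<Rightarrow> real"
    and a0 :: "nat \<Rightarrow> real" and a :: "nat \<Rightarrow> nat \<Rightarrow> real"
    and rho :: "nat \<Rightarrow> real" and y :: "nat \<Rightarrow> nat \<Rightarrow> real" and x :: "nat \<Rightarrow> real"
    and W :: "nat \<Rightarrow> nat \<Rightarrow> nat \<Rightarrow> real"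
  assumes p_le: "p \<le> n"
    and box_lo: "\<forall>j<p. \<exists>r<q. (\<forall>k<n. C r k = (if k = j then -1 else 0)) \<and> d r = 0"
    and box_hi: "\<forall>j<p. \<exists>r<q. (\<forall>k<n. C r k = (if k = j then 1 else 0)) \<and> d r = 1"
    and P_nonempty: "\<exists>z. feasible n q C d z"
    and P_bounded: "\<exists>B. \<forall>z. feasible n q C d z \<longrightarrow> (\<forall>j<n. \<bar>z j\<bar> \<le> B)"
    and pos: "\<forall>i<m. \<forall>z. feasible n q C d z \<longrightarrow> 0 < a0 i + (\<Sum>k<n. a i k * z k)"
    and W_sym: "\<forall>i<m. symm_mat n (W i)"
    and in_RQP: "RQP m n p q C d a0 a rho y x W"
  shows "(\<forall>i<m. psd (n + 1) (bord1 (rho i) (y i) (W i)) \<longleftrightarrow>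
                psd (n + 2) (bord2 (a0 i + (\<Sum>k<n. a i k * x k)) x (rho i) (y i) (W i)))
    \<and> {(rho', y', x', W'). RQP m n p q C d a0 a rho' y' x' W' \<and> (\<forall>i<m. symm_mat n (W' i)) \<and>
          (\<forall>i<m. psd (n + 1) (bord1 (rho' i) (y' i) (W' i)))}
      = {(rho', y', x', W'). RQP m n p q C d a0 a rho' y' x' W' \<and> (\<forall>i<m. symm_mat n (W' i)) \<and>
          (\<forall>i<m. psd (n + 2) (bord2 (a0 i + (\<Sum>k<n. a i k * x' k)) x' (rho' i) (y' i) (W' i)))}"
  using RQP_psd_bord1_iff_psd_bord2[OF in_RQP] RQP_psd_bord1_iff_psd_bord2 by auto

end
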